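(* Let $\lambda$ be a non-discrete Hausdorff linear group topology on $\mathbb{Z}$. Then there exists a metrizable locally quasi-convex Hausdorff group topology $\tau$ on $\mathbb{Z}$ which is strictly finer than $\lambda$ and satisfies $(\mathbb{Z},\tau)^\wedge=(\mathbb{Z},\lambda)^\wedge$. Consequently $\lambda$ is not the Mackey topology; in particular, for every prime $p$ the $p$-adic topology on $\mathbb{Z}$ (with neighborhood basis $\{p^n\mathbb{Z}\}_{n\in\mathbb{N}_0}$ at $0$) is not a Mackey topology.
   Context: $\mathbb{T}=\mathbb{R}/\mathbb{Z}$, $\mathbb{T}_+=[-\frac14,\frac14]+\mathbb{Z}$. For a topological abelian group $G$, $G^\wedge$ is the group of continuous homomorphisms $G\to\mathbb{T}$. A group topology is linear if it has a neighborhood basis at $0$ of subgroups. For $A\subseteq G$, $A^\triangleright=\{\chi\in G^\wedge:\chi(A)\subseteq\mathbb{T}_+\}$; for $B\subseteq G^\wedge$, $B^\triangleleft=\{x\in G:\chi(x)\in\mathbb{T}_+\ \forall\chi\in B\}$; $A$ is quasi-convex if $A=(A^\triangleright)^\triangleleft$; $G$ is locally quasi-convex if it has a neighborhood basis at $0$ of quasi-convex sets. Two locally quasi-convex group topologies on the same group are compatible if they have the same continuous characters. A locally quasi-convex group topology $\lambda$ on $G$ is the Mackey topology if it is the finest locally quasi-convex group topology on $G$ compatible with $\lambda$. *)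

theory Defs
  imports "HOL-Analysis.Analysis" "HOL-Computational_Algebra.Primes"
begin

text \<open>The circle group T = R/Z is represented by normalised representatives in [0,1);
  a character of Z is a map chi : int => real with values in [0,1) that is a homomorphism
  modulo 1. Continuity into T is continuity of the composite with the homeomorphism
  R/Z -> S^1, t |-> exp(2 pi i t).\<close>

definition Tplus :: "real \<Rightarrow> bool" where
  "Tplus x \<longleftrightarrow> frac x \<le> 1/4 \<or> frac x \<ge> 3/4"

definition group_topology_int :: "int topology \<Rightarrow> bool" where
  "group_topology_int T \<longleftrightarrow> topspace T = UNIV \<and>
     continuous_map (prod_topology T T) T (\<lambda>(x, y). x + y) \<and>
     continuous_map T T uminus"

definition nhd0 :: "int topology \<Rightarrow> int set \<Rightarrow> bool" where
  "nhd0 T N \<longleftrightarrow> (\<exists>V. openin T V \<and> 0 \<in> V \<and> V \<subseteq> N)"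

definition int_subgroup :: "int set \<Rightarrow> bool" where
  "int_subgroup H \<longleftrightarrow> 0 \<in> H \<and> (\<forall>x\<in>H. \<forall>y\<in>H. x - y \<in> H)"

definition linear_topology_int :: "int topology \<Rightarrow> bool" where
  "linear_topology_int T \<longleftrightarrow>
     (\<forall>U. nhd0 T U \<longrightarrow> (\<exists>H. int_subgroup H \<and> nhd0 T H \<and> H \<subseteq> U))"

definition dual :: "int topology \<Rightarrow> (int \<Rightarrow> real) set" where
  "dual T = {chr. (\<forall>n. 0 \<le> chr n \<and> chr n < 1) \<and>
                 (\<forall>m n. chr (m + n) = frac (chr m + chr n)) \<and>
                 continuous_map T euclidean (\<lambda>n. cis (2 * pi * chr n))}"

definition polar :: "int topology \<Rightarrow> int set \<Rightarrow> (int \<Rightarrow> real) set" where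
  "polar T A = {chr \<in> dual T. \<forall>x\<in>A. Tplus (chr x)}"

definition prepolar :: "(int \<Rightarrow> real) set \<Rightarrow> int set" where
  "prepolar B = {x. \<forall>chr\<in>B. Tplus (chr x)}"

definition quasi_convex :: "int topology \<Rightarrow> int set \<Rightarrow> bool" where
  "quasi_convex T A \<longleftrightarrow> A = prepolar (polar T A)"

definition locally_quasi_convex :: "int topology \<Rightarrow> bool" where
  "locally_quasi_convex T \<longleftrightarrow>
     (\<forall>U. nhd0 T U \<longrightarrow> (\<exists>Q. quasi_convex T Q \<and> nhd0 T Q \<and> Q \<subseteq> U))"

definition finer :: "int topology \<Rightarrow> int topology \<Rightarrow> bool" where
  "finer t L \<longleftrightarrow> (\<forall>U. openin L U \<longrightarrow> openin t U)"

definition mackey :: "int topology \<Rightarrow> bool" where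
  "mackey L \<longleftrightarrow> group_topology_int L \<and> locally_quasi_convex L \<and>
     (\<forall>\<mu>. group_topology_int \<mu> \<and> locally_quasi_convex \<mu> \<and> dual \<mu> = dual L
           \<longrightarrow> finer L \<mu>)"

definition padic_topology :: "int \<Rightarrow> int topology" where
  "padic_topology p = topology (\<lambda>U. \<forall>x\<in>U. \<exists>n::nat. {x + p ^ n * k | k. True} \<subseteq> U)"

end

theory Submission
  imports Defs
begin

(* Such an L has a neighbourhood base of subgroups b_0 Z, b_1 Z, ... with b_j dividing
   b_(j+1), and after thinning we may assume (j+2) b_j <= b_(j+1).  Writing ||y|| for the
   distance from y to the nearest integer, rho(x) = sup_j ||x / b_j|| is a group norm on Z,
   and its metric topology tau is metrizable, Hausdorff and finer than L (rho(x) < 1/b_j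
   forces b_j | x), but not equal to L (no coset b_j Z lies in the rho-ball of radius 1/4).
   The tau-balls {rho <= 1/(4m)} are prepolars of the L-continuous characters x |-> i x / b_j,
   i = 1..m, so tau is locally quasi-convex and every L-character is tau-continuous.
   Conversely a tau-continuous character x |-> x theta must vanish on some b_M Z, so it is
   L-continuous. *)

section \<open>Distance to the nearest integer\<close>

definition int_dist :: "real \<Rightarrow> real" where
  "int_dist y = min (frac y) (1 - frac y)"

lemma Tplus_iff_int_dist: "Tplus y \<longleftrightarrow> int_dist y \<le> 1/4"
  unfolding Tplus_def int_dist_def min_def by auto

lemma int_dist_frac [simp]: "int_dist (frac y) = int_dist y"
  unfolding int_dist_def by simp

lemma int_dist_add_of_int [simp]: "int_dist (y + of_int k) = int_dist y"
  unfolding int_dist_def by simp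

lemma int_dist_diff_Ints: "y - z \<in> \<int> \<Longrightarrow> int_dist y = int_dist z"
  by (metis Ints_cases diff_add_cancel int_dist_add_of_int add.commute)

lemma int_dist_nonneg: "0 \<le> int_dist y"
  unfolding int_dist_def using frac_lt_1[of y] by simp

lemma int_dist_le_half: "int_dist y \<le> 1/2"
  unfolding int_dist_def min_def by auto

lemma int_dist_minus [simp]: "int_dist (- y) = int_dist y"
proof (cases "y \<in> \<int>")
  case True
  then have "frac y = 0" "frac (- y) = 0" by simp_all
  then show ?thesis unfolding int_dist_def by (simp only:)
qed (auto simp: int_dist_def frac_neg)

lemma int_dist_eq_self: "0 \<le> y \<Longrightarrow> y \<le> 1/2 \<Longrightarrow> int_dist y = y"
  unfolding int_dist_def by (simp add: frac_eq)

lemma int_dist_eq_0_imp_Ints: "int_dist y = 0 \<Longrightarrow> y \<in> \<int>"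
  unfolding int_dist_def using frac_lt_1[of y] by (auto simp: min_def split: if_splits)

lemma int_dist_le: "int_dist y \<le> \<bar>y - of_int k\<bar>"
proof -
  have a: "of_int \<lfloor>y\<rfloor> \<le> y" "y < of_int \<lfloor>y\<rfloor> + 1" by linarith+
  consider "k \<le> \<lfloor>y\<rfloor>" | "k \<ge> \<lfloor>y\<rfloor> + 1" by linarith
  then show ?thesis
    by cases (use a in \<open>auto simp: int_dist_def frac_def\<close>)
qed

lemma int_dist_attained: "\<exists>k. int_dist y = \<bar>y - of_int k\<bar>"
proof -
  have a: "of_int \<lfloor>y\<rfloor> \<le> y" "y < of_int \<lfloor>y\<rfloor> + 1" by linarith+
  show ?thesis
  proof (cases "frac y \<le> 1 - frac y")
    case True
    then show ?thesis using a by (intro exI[of _ "\<lfloor>y\<rfloor>"]) (auto simp: int_dist_def frac_def)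
  next
    case False
    then show ?thesis using a by (intro exI[of _ "\<lfloor>y\<rfloor> + 1"]) (auto simp: int_dist_def frac_def)
  qed
qed

lemma int_dist_le_abs: "int_dist y \<le> \<bar>y\<bar>"
  using int_dist_le[of y 0] by simp

lemma int_dist_triangle: "int_dist (a + b) \<le> int_dist a + int_dist b"
proof -
  obtain k l where k: "int_dist a = \<bar>a - of_int k\<bar>" and l: "int_dist b = \<bar>b - of_int l\<bar>"
    using int_dist_attained by blast
  have "int_dist (a + b) \<le> \<bar>a + b - of_int (k + l)\<bar>" by (rule int_dist_le)
  also have "\<dots> \<le> int_dist a + int_dist b" unfolding k l by simp
  finally show ?thesis .
qed

lemma int_dist_mult_nat: "int_dist (of_nat n * y) \<le> of_nat n * int_dist y"
proof -
  obtain k where k: "int_dist y = \<bar>y - of_int k\<bar>" using int_dist_attained by blast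
  have "int_dist (of_nat n * y) \<le> \<bar>of_nat n * y - of_int (int n * k)\<bar>" by (rule int_dist_le)
  also have "\<dots> = of_nat n * int_dist y"
    unfolding k by (simp add: abs_mult right_diff_distrib[symmetric])
  finally show ?thesis .
qed

lemma int_dist_sign: "\<exists>\<sigma>::int. (\<sigma> = 1 \<or> \<sigma> = -1) \<and> of_int \<sigma> * y - int_dist y \<in> \<int>"
proof -
  obtain k where k: "int_dist y = \<bar>y - of_int k\<bar>" using int_dist_attained by blast
  show ?thesis
  proof (cases "y - of_int k \<ge> 0")
    case True
    then have "of_int 1 * y - int_dist y = of_int k" using k by simp
    then show ?thesis by (metis Ints_of_int)
  next
    case False
    then have "of_int (-1) * y - int_dist y = of_int (- k)" using k by simp
    then show ?thesis by (metis Ints_of_int)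
  qed
qed

lemma progression_stays_small:
  assumes "0 \<le> v" "v \<le> 1/4" "0 \<le> t" "t \<le> 1/4"
    and small: "\<And>n. n \<le> N \<Longrightarrow> int_dist (v + of_nat n * t) \<le> 1/4" and "n \<le> N"
  shows "v + of_nat n * t \<le> 1/4"
  using \<open>n \<le> N\<close>
proof (induction n)
  case 0
  then show ?case using assms by simp
next
  case (Suc n)
  then have "v + of_nat n * t \<le> 1/4" by simp
  then have "0 \<le> v + of_nat (Suc n) * t" "v + of_nat (Suc n) * t \<le> 1/2"
    using assms(1,3,4) by (auto simp: distrib_right)
  then have "int_dist (v + of_nat (Suc n) * t) = v + of_nat (Suc n) * t" by (rule int_dist_eq_self)
  then show ?case using small[OF Suc.prems] by simp
qed

text \<open>The basic computation behind quasi-convexity: \<open>i y \<in> T\<^sub>+\<close> for \<open>i = 1..m\<close> exactly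
  when \<open>y\<close> lies within \<open>1/(4m)\<close> of an integer.\<close>

lemma multiples_in_Tplus_iff:
  assumes "1 \<le> m"
  shows "(\<forall>i\<in>{1..m}. int_dist (of_nat i * y) \<le> 1/4) \<longleftrightarrow> int_dist y \<le> 1 / (4 * of_nat m)"
proof
  assume a: "\<forall>i\<in>{1..m}. int_dist (of_nat i * y) \<le> 1/4"
  obtain \<sigma>::int where s: "\<sigma> = 1 \<or> \<sigma> = -1" "of_int \<sigma> * y - int_dist y \<in> \<int>"
    using int_dist_sign by blast
  have same: "int_dist (of_nat i * int_dist y) = int_dist (of_nat i * y)" for i
  proof -
    have "of_nat i * (of_int \<sigma> * y) - of_nat i * int_dist y \<in> \<int>"
      using s(2) by (metis Ints_mult Ints_of_nat right_diff_distrib)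
    then have "int_dist (of_nat i * int_dist y) = int_dist (of_nat i * (of_int \<sigma> * y))"
      by (metis int_dist_diff_Ints)
    also have "\<dots> = int_dist (of_nat i * y)" using s(1) by auto
    finally show ?thesis .
  qed
  have multiples: "int_dist (of_nat i * int_dist y) \<le> 1/4" if "i \<le> m" for i
  proof (cases "i = 0")
    case True
    then show ?thesis by (simp add: int_dist_def)
  next
    case False
    then have "i \<in> {1..m}" using that by simp
    then show ?thesis using a same[of i] by simp
  qed
  have "int_dist (int_dist y) = int_dist y"
    by (intro int_dist_eq_self int_dist_nonneg int_dist_le_half)
  then have "int_dist y \<le> 1/4" using multiples[of 1] assms by simp
  then have "0 + of_nat m * int_dist y \<le> 1/4"
    using multiples int_dist_nonneg by (intro progression_stays_small[of _ _ m]) auto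
  then have "of_nat m * int_dist y \<le> 1/4" by simp
  then show "int_dist y \<le> 1 / (4 * of_nat m)" using assms by (simp add: field_simps)
next
  assume a: "int_dist y \<le> 1 / (4 * of_nat m)"
  show "\<forall>i\<in>{1..m}. int_dist (of_nat i * y) \<le> 1/4"
  proof
    fix i assume i: "i \<in> {1..m}"
    have "int_dist (of_nat i * y) \<le> of_nat i * int_dist y" by (rule int_dist_mult_nat)
    also have "\<dots> \<le> of_nat m * (1 / (4 * of_nat m))"
      using i a int_dist_nonneg by (intro mult_mono) auto
    also have "\<dots> = 1/4" using assms by simp
    finally show "int_dist (of_nat i * y) \<le> 1/4" .
  qed
qed

section \<open>Characters of the integers\<close>

lemma character_eq_frac_mult:
  fixes chr :: "int \<Rightarrow> real"
  assumes range: "\<And>n. 0 \<le> chr n \<and> chr n < 1"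
    and hom: "\<And>m n. chr (m + n) = frac (chr m + chr n)"
  shows "chr x = frac (of_int x * chr 1)"
proof -
  have hom_Ints: "chr m + chr n - chr (m + n) \<in> \<int>" for m n
  proof -
    have "frac (chr m + chr n) = chr (m + n)" using hom[of m n] by simp
    then show ?thesis unfolding frac_unique_iff by simp
  qed
  have "of_int x * chr 1 - chr x \<in> \<int>"
  proof (induction x rule: int_induct[where k=0])
    case base
    have "chr 0 \<in> \<int>" using hom_Ints[of 0 0] by simp
    then show ?case by simp
  next
    case (step1 i)
    have "of_int (i + 1) * chr 1 - chr (i + 1)
        = (of_int i * chr 1 - chr i) + (chr i + chr 1 - chr (i + 1))"
      by (simp add: algebra_simps)
    then show ?case using step1(2) hom_Ints[of i 1] by (metis Ints_add)
  next
    case (step2 i)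
    have "chr (i - 1) + chr 1 - chr i \<in> \<int>" using hom_Ints[of "i - 1" 1] by simp
    moreover have "of_int (i - 1) * chr 1 - chr (i - 1)
        = (of_int i * chr 1 - chr i) - (chr (i - 1) + chr 1 - chr i)"
      by (simp add: algebra_simps)
    ultimately show ?case using step2(2) by (metis Ints_diff)
  qed
  then have "frac (of_int x * chr 1) = chr x" using range[of x] by (simp add: frac_unique_iff)
  then show ?thesis by simp
qed

text \<open>A point \<open>c \<in> [0,1)\<close> whose image \<open>e^(2\<pi>ic)\<close> lies within distance 1 of 1 is in \<open>T\<^sub>+\<close>;
  this turns continuity of a character at 0 into smallness modulo 1.\<close>

lemma cis_near_one_imp_Tplus:
  assumes "cmod (cis (2 * pi * c) - 1) < 1" "0 \<le> c" "c < 1"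
  shows "int_dist c \<le> 1/4"
proof (rule ccontr)
  assume "\<not> int_dist c \<le> 1/4"
  moreover have "frac c = c" using assms(2,3) by (simp add: frac_eq)
  ultimately have "c > 1/4" "1 - c > 1/4" unfolding int_dist_def min_def by (auto split: if_splits)
  then have "cos (2 * pi * c) < 0" by (intro cos_lt_zero_pi) (auto simp: field_simps)
  then have "\<bar>Re (cis (2 * pi * c) - 1)\<bar> > 1" by simp
  moreover have "\<bar>Re (cis (2 * pi * c) - 1)\<bar> \<le> cmod (cis (2 * pi * c) - 1)" by (rule abs_Re_le_cmod)
  ultimately show False using assms(1) by linarith
qed

lemma prepolar_quasi_convex:
  assumes "B \<subseteq> dual T"
  shows "quasi_convex T (prepolar B)"
  unfolding quasi_convex_def
proof
  show "prepolar B \<subseteq> prepolar (polar T (prepolar B))"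
    unfolding prepolar_def polar_def by auto
  have "B \<subseteq> polar T (prepolar B)" using assms unfolding prepolar_def polar_def by auto
  then show "prepolar (polar T (prepolar B)) \<subseteq> prepolar B"
    unfolding prepolar_def by auto
qed

lemma dual_mono:
  assumes "finer t L" "topspace L = UNIV" "topspace t = UNIV"
  shows "dual L \<subseteq> dual t"
proof
  fix chr assume "chr \<in> dual L"
  then have "continuous_map L euclidean (\<lambda>n. cis (2 * pi * chr n))" unfolding dual_def by simp
  then have "continuous_map t euclidean (\<lambda>n. cis (2 * pi * chr n))"
    using assms unfolding continuous_map finer_def by simp
  then show "chr \<in> dual t" using \<open>chr \<in> dual L\<close> unfolding dual_def by simp
qed

section \<open>Group norms on the integers\<close>

locale int_group_norm =
  fixes rho :: "int \<Rightarrow> real"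
  assumes rho_eq_0_iff: "rho x = 0 \<longleftrightarrow> x = 0"
    and rho_minus: "rho (- x) = rho x"
    and rho_triangle: "rho (x + y) \<le> rho x + rho y"
begin

lemma rho_0 [simp]: "rho 0 = 0"
  using rho_eq_0_iff by simp

lemma rho_nonneg: "0 \<le> rho x"
  using rho_triangle[of x "- x"] rho_minus[of x] by simp

definition norm_dist :: "int \<Rightarrow> int \<Rightarrow> real" where
  "norm_dist x y = rho (x - y)"

sublocale N: Metric_space UNIV norm_dist
proof
  show "0 \<le> norm_dist x y" for x y unfolding norm_dist_def by (rule rho_nonneg)
  show "norm_dist x y = norm_dist y x" for x y unfolding norm_dist_def by (metis minus_diff_eq rho_minus)
  show "norm_dist x y = 0 \<longleftrightarrow> x = y" for x y unfolding norm_dist_def by (simp add: rho_eq_0_iff)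
  show "norm_dist x z \<le> norm_dist x y + norm_dist y z" for x y z
    unfolding norm_dist_def using rho_triangle[of "x - y" "y - z"] by simp
qed

lemma openin_norm_topology:
  "openin N.mtopology U \<longleftrightarrow> (\<forall>x\<in>U. \<exists>r>0. \<forall>y. rho (x - y) < r \<longrightarrow> y \<in> U)"
  unfolding N.openin_mtopology by (auto simp: subset_iff norm_dist_def)

text \<open>Addition is continuous: the product topology is that of the product metric, which
  dominates each coordinate distance, and \<open>\<rho>\<close> is subadditive.\<close>

lemma norm_add_continuous:
  "continuous_map (prod_topology N.mtopology N.mtopology) N.mtopology (\<lambda>(x, y). x + y)"
proof -
  interpret P: Metric_space12 UNIV norm_dist UNIV norm_dist
    by (simp add: Metric_space12_def N.Metric_space_axioms)
  have "continuous_map P.Prod_metric.mtopology N.mtopology (\<lambda>(x, y). x + y)"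
    unfolding P.Prod_metric.metric_continuous_map[OF N.Metric_space_axioms]
  proof (intro conjI ballI allI impI)
    fix a :: "int \<times> int" and \<epsilon> :: real assume "\<epsilon> > 0"
    show "\<exists>\<delta>>0. \<forall>x. x \<in> UNIV \<times> UNIV \<and> prod_dist norm_dist norm_dist a x < \<delta> \<longrightarrow>
        norm_dist (case a of (x, y) \<Rightarrow> x + y) (case x of (x, y) \<Rightarrow> x + y) < \<epsilon>"
    proof (intro exI[of _ "\<epsilon>/2"] conjI allI impI)
      fix x :: "int \<times> int" assume "x \<in> UNIV \<times> UNIV \<and> prod_dist norm_dist norm_dist a x < \<epsilon>/2"
      moreover obtain a1 a2 x1 x2 where "a = (a1, a2)" "x = (x1, x2)" by fastforce
      ultimately have "norm_dist a1 x1 < \<epsilon>/2" "norm_dist a2 x2 < \<epsilon>/2"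
        using P.component_le_prod_metric(1)[of a1 x1 a2 x2] P.component_le_prod_metric(2)[of a2 x2 a1 x1]
        by auto
      moreover have "norm_dist (a1 + a2) (x1 + x2) \<le> norm_dist a1 x1 + norm_dist a2 x2"
        unfolding norm_dist_def using rho_triangle[of "a1 - x1" "a2 - x2"] by (simp add: algebra_simps)
      ultimately show "norm_dist (case a of (x, y) \<Rightarrow> x + y) (case x of (x, y) \<Rightarrow> x + y) < \<epsilon>"
        using \<open>a = (a1, a2)\<close> \<open>x = (x1, x2)\<close> by simp
    qed (use \<open>\<epsilon> > 0\<close> in simp)
  qed simp
  then show ?thesis unfolding P.mtopology_prod_metric .
qed

text \<open>Negation is an isometry.\<close>

lemma norm_uminus_continuous: "continuous_map N.mtopology N.mtopology uminus"
  unfolding N.metric_continuous_map[OF N.Metric_space_axioms]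
proof (intro conjI ballI allI impI)
  fix a :: int and \<epsilon> :: real assume "\<epsilon> > 0"
  have "norm_dist (- a) (- x) < \<epsilon>" if "norm_dist a x < \<epsilon>" for x
  proof -
    have "norm_dist (- a) (- x) = norm_dist a x"
      unfolding norm_dist_def using rho_minus[of "a - x"] by simp
    then show ?thesis using that by simp
  qed
  then show "\<exists>\<delta>>0. \<forall>x. x \<in> UNIV \<and> norm_dist a x < \<delta> \<longrightarrow> norm_dist (- a) (- x) < \<epsilon>"
    using \<open>\<epsilon> > 0\<close> by auto
qed simp

lemma norm_topology_group: "group_topology_int N.mtopology"
  unfolding group_topology_int_def using norm_add_continuous norm_uminus_continuous by simp

end

section \<open>The metric topology attached to a divisor chain\<close>

text \<open>The growth condition
  \<open>(j+2) b\<^sub>j \<le> b\<^sub>j\<^sub>+\<^sub>1\<close> drives the analysis of \<open>\<tau>\<close>-continuous characters below.\<close>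

locale divisor_chain =
  fixes b :: "nat \<Rightarrow> int" and L :: "int topology"
  assumes b_pos: "\<And>j. 1 \<le> b j"
    and b_dvd_Suc: "\<And>j. b j dvd b (Suc j)"
    and b_growth: "\<And>j. (int j + 2) * b j \<le> b (Suc j)"
    and openin_L: "\<And>U. openin L U \<longleftrightarrow> (\<forall>x\<in>U. \<exists>j. \<forall>k. x + b j * k \<in> U)"
begin

lemma b_dvd_mono: "i \<le> j \<Longrightarrow> b i dvd b j"
proof (induction j rule: dec_induct)
  case (step n)
  then show ?case using b_dvd_Suc[of n] dvd_trans by blast
qed simp

lemma b_mono: "i \<le> j \<Longrightarrow> b i \<le> b j"
  using b_dvd_mono b_pos by (meson zdvd_imp_le order_less_le_trans zero_less_one)

lemma b_pos_real: "0 < real_of_int (b j)"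
  using b_pos[of j] by simp

lemma b_Suc_quotient: "\<exists>r. b (Suc j) = b j * r \<and> 2 \<le> r"
proof -
  obtain r where r: "b (Suc j) = b j * r" using b_dvd_Suc by blast
  have "b j * 2 \<le> b j * r"
    using b_growth[of j] b_pos[of j] r mult_right_mono[of 2 "int j + 2" "b j"] by (simp add: mult.commute)
  then show ?thesis using r b_pos[of j] by auto
qed

lemma b_double: "2 * b j \<le> b (Suc j)"
proof -
  obtain r where "b (Suc j) = b j * r" "2 \<le> r" using b_Suc_quotient by blast
  then show ?thesis using b_pos[of j] mult_left_mono[of 2 r "b j"] by (simp add: mult.commute)
qed

lemma b_gt_index: "int j < b j"
proof (induction j)
  case 0 then show ?case using b_pos[of 0] by simp
next
  case (Suc j) then show ?case using b_double[of j] b_pos[of j] by simp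
qed

lemma topspace_L: "topspace L = UNIV"
proof -
  have "openin L UNIV" using openin_L by simp
  then show ?thesis by (metis openin_subset top.extremum_uniqueI)
qed

lemma periodic_imp_continuous:
  fixes f :: "int \<Rightarrow> 'a::topological_space"
  assumes "\<And>x k. f (x + b j * k) = f x"
  shows "continuous_map L euclidean f"
  unfolding continuous_map topspace_L
proof (intro conjI allI impI)
  fix U :: "'a set"
  show "openin L {x \<in> UNIV. f x \<in> U}"
    unfolding openin_L by (intro ballI exI[of _ j] allI) (simp add: assms)
qed simp

definition rho :: "int \<Rightarrow> real" where
  "rho x = (SUP j. int_dist (real_of_int x / real_of_int (b j)))"

lemma rho_le_iff: "rho x \<le> c \<longleftrightarrow> (\<forall>j. int_dist (real_of_int x / real_of_int (b j)) \<le> c)"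
proof -
  have "bdd_above (range (\<lambda>j. int_dist (real_of_int x / real_of_int (b j))))"
    using int_dist_le_half by (intro bdd_aboveI[of _ "1/2"]) auto
  then show ?thesis unfolding rho_def by (simp add: cSUP_le_iff)
qed

lemma int_dist_le_rho: "int_dist (real_of_int x / real_of_int (b j)) \<le> rho x"
  using rho_le_iff[of x "rho x"] by simp

text \<open>Small norm forces divisibility: this makes \<open>\<tau>\<close> finer than \<open>L\<close>.\<close>

lemma rho_small_imp_dvd:
  assumes "rho x < 1 / real_of_int (b j)"
  shows "b j dvd x"
proof -
  obtain k where k: "int_dist (real_of_int x / real_of_int (b j))
      = \<bar>real_of_int x / real_of_int (b j) - of_int k\<bar>"
    using int_dist_attained by blast
  have "\<bar>real_of_int x / real_of_int (b j) - of_int k\<bar> < 1 / real_of_int (b j)"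
    using int_dist_le_rho[of x j] assms k by linarith
  also have "\<bar>real_of_int x / real_of_int (b j) - of_int k\<bar>
      = \<bar>real_of_int (x - k * b j)\<bar> / real_of_int (b j)"
  proof -
    have "real_of_int x / real_of_int (b j) - of_int k = real_of_int (x - k * b j) / real_of_int (b j)"
      using b_pos_real[of j] by (simp add: field_simps)
    then show ?thesis using b_pos_real[of j] by simp
  qed
  finally have "\<bar>real_of_int (x - k * b j)\<bar> < 1"
    using b_pos_real[of j] by (simp add: divide_less_eq)
  then have "x = k * b j" by linarith
  then show ?thesis by simp
qed

sublocale int_group_norm rho
proof
  show "rho (- x) = rho x" for x unfolding rho_def by simp
  show "rho (x + y) \<le> rho x + rho y" for x y
    unfolding rho_le_iff
  proof
    fix j
    have "int_dist (real_of_int (x + y) / real_of_int (b j))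
        \<le> int_dist (real_of_int x / real_of_int (b j)) + int_dist (real_of_int y / real_of_int (b j))"
      using int_dist_triangle by (simp add: add_divide_distrib)
    also have "\<dots> \<le> rho x + rho y" using int_dist_le_rho by (intro add_mono)
    finally show "int_dist (real_of_int (x + y) / real_of_int (b j)) \<le> rho x + rho y" .
  qed
  show "rho x = 0 \<longleftrightarrow> x = 0" for x
  proof
    assume "rho x = 0"
    then have "b (nat \<bar>x\<bar>) dvd x" using b_pos_real rho_small_imp_dvd by simp
    moreover have "\<bar>x\<bar> < b (nat \<bar>x\<bar>)" using b_gt_index[of "nat \<bar>x\<bar>"] by simp
    ultimately show "x = 0" using dvd_imp_le_int[of x "b (nat \<bar>x\<bar>)"] by fastforce
  next
    assume "x = 0"
    have "rho 0 \<le> 0" unfolding rho_le_iff by (simp add: int_dist_def)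
    moreover have "0 \<le> rho 0" using int_dist_le_rho[of 0 0] int_dist_nonneg[of 0] by simp
    ultimately show "rho x = 0" using \<open>x = 0\<close> by simp
  qed
qed

abbreviation tau :: "int topology" where
  "tau \<equiv> N.mtopology"

lemma topspace_tau: "topspace tau = UNIV"
  by simp

lemma tau_finer: "finer tau L"
  unfolding finer_def openin_norm_topology
proof (intro allI impI ballI)
  fix U x assume "openin L U" "x \<in> U"
  then obtain j where j: "\<And>k. x + b j * k \<in> U" using openin_L by blast
  have "y \<in> U" if "rho (x - y) < 1 / real_of_int (b j)" for y
  proof -
    have "b j dvd y - x" using rho_small_imp_dvd that rho_minus by (metis minus_diff_eq)
    then obtain k where "y = x + b j * k" by (metis add.commute diff_add_cancel dvdE)
    then show ?thesis using j by simp
  qed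
  moreover have "0 < 1 / real_of_int (b j)" using b_pos_real[of j] by simp
  ultimately show "\<exists>r>0. \<forall>y. rho (x - y) < r \<longrightarrow> y \<in> U" by blast
qed

text \<open>Every subgroup \<open>b\<^sub>j\<int>\<close> contains an element of norm at least \<open>1/3\<close>, so no \<open>L\<close>-neighbourhood
  of 0 fits into the \<open>\<rho>\<close>-ball of radius \<open>1/4\<close>.\<close>

lemma large_multiple: "\<exists>k. 1/3 \<le> rho (b j * k)"
proof -
  obtain r where r: "b (Suc j) = b j * r" "2 \<le> r" using b_Suc_quotient by blast
  define k where "k = r div 2"
  have "2 * k \<le> r" "r \<le> 3 * k" using r(2) unfolding k_def by linarith+
  then have "1/3 \<le> real_of_int k / real_of_int r" "real_of_int k / real_of_int r \<le> 1/2"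
    using r(2) by (simp_all add: field_simps)
  then have "int_dist (real_of_int k / real_of_int r) = real_of_int k / real_of_int r"
    by (intro int_dist_eq_self) linarith+
  with \<open>1/3 \<le> real_of_int k / real_of_int r\<close>
  have "1/3 \<le> int_dist (real_of_int k / real_of_int r)" by simp
  also have "real_of_int k / real_of_int r = real_of_int (b j * k) / real_of_int (b (Suc j))"
    using r(1) b_pos_real[of j] by simp
  also have "int_dist \<dots> \<le> rho (b j * k)" by (rule int_dist_le_rho)
  finally show ?thesis by blast
qed

lemma tau_ne_L: "tau \<noteq> L"
proof
  assume "tau = L"
  then have "openin L (N.mball 0 (1/4))" by (metis N.openin_mball)
  moreover have "0 \<in> N.mball 0 (1/4)" by simp
  ultimately obtain j where "\<forall>k. 0 + b j * k \<in> N.mball 0 (1/4)"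
    unfolding openin_L by blast
  then have small: "rho (b j * k) < 1/4" for k
    by (simp add: norm_dist_def rho_minus)
  obtain k where "1/3 \<le> rho (b j * k)" using large_multiple by blast
  with small[of k] show False by linarith
qed

text \<open>The characters \<open>x \<mapsto> i x / b\<^sub>j\<close> modulo 1 are periodic modulo \<open>b\<^sub>j\<close>, hence \<open>L\<close>-continuous;
  their prepolars are the closed \<open>\<rho>\<close>-balls.\<close>

definition chain_character :: "nat \<Rightarrow> nat \<Rightarrow> int \<Rightarrow> real" where
  "chain_character i j x = frac (of_nat i * (real_of_int x / real_of_int (b j)))"

lemma chain_character_in_dual: "chain_character i j \<in> dual L"
proof -
  have "0 \<le> chain_character i j n \<and> chain_character i j n < 1" for n
    unfolding chain_character_def using frac_lt_1 by auto
  moreover have "chain_character i j (m + n) = frac (chain_character i j m + chain_character i j n)"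
    for m n unfolding chain_character_def by (simp add: add_divide_distrib distrib_left)
  moreover have "chain_character i j (x + b j * k) = chain_character i j x" for x k
  proof -
    have "of_nat i * (real_of_int (x + b j * k) / real_of_int (b j))
        = of_nat i * (real_of_int x / real_of_int (b j)) + of_int (int i * k)"
      using b_pos_real[of j] by (simp add: field_simps)
    then show ?thesis by (simp only: chain_character_def frac_add_of_int_right)
  qed
  then have "continuous_map L euclidean (\<lambda>n. cis (2 * pi * chain_character i j n))"
    by (intro periodic_imp_continuous[where j=j]) simp
  ultimately show ?thesis unfolding dual_def by blast
qed

lemma dual_L_subset_dual_tau: "dual L \<subseteq> dual tau"
  by (rule dual_mono[OF tau_finer topspace_L topspace_tau])

lemma rho_ball_eq_prepolar:
  assumes "1 \<le> m"
  shows "{x. rho x \<le> 1 / (4 * of_nat m)} = prepolar {chain_character i j | i j. i \<in> {1..m}}"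
proof -
  have "x \<in> prepolar {chain_character i j | i j. i \<in> {1..m}} \<longleftrightarrow>
      (\<forall>j. \<forall>i\<in>{1..m}. int_dist (of_nat i * (real_of_int x / real_of_int (b j))) \<le> 1/4)" for x
  proof
    assume x: "x \<in> prepolar {chain_character i j | i j. i \<in> {1..m}}"
    show "\<forall>j. \<forall>i\<in>{1..m}. int_dist (of_nat i * (real_of_int x / real_of_int (b j))) \<le> 1/4"
    proof (intro allI ballI)
      fix j i assume "i \<in> {1..m}"
      then have "Tplus (chain_character i j x)" using x unfolding prepolar_def by blast
      then show "int_dist (of_nat i * (real_of_int x / real_of_int (b j))) \<le> 1/4"
        unfolding Tplus_iff_int_dist chain_character_def by simp
    qed
  qed (auto simp: prepolar_def Tplus_iff_int_dist chain_character_def)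
  then show ?thesis unfolding rho_le_iff multiples_in_Tplus_iff[OF assms] by auto
qed

lemma tau_locally_quasi_convex: "locally_quasi_convex tau"
  unfolding locally_quasi_convex_def
proof (intro allI impI)
  fix U assume "nhd0 tau U"
  then obtain V where V: "openin tau V" "0 \<in> V" "V \<subseteq> U" unfolding nhd0_def by blast
  then obtain r where "r > 0" "N.mball 0 r \<subseteq> V" unfolding N.openin_mtopology by blast
  obtain m :: nat where m: "1 / (4 * r) < of_nat m" using reals_Archimedean2 by blast
  have "1 \<le> m" using m \<open>r > 0\<close> by (cases m) (auto simp: field_simps)
  have "1 / (4 * of_nat m) < r" using m \<open>r > 0\<close> \<open>1 \<le> m\<close> by (simp add: field_simps)
  define Q where "Q = {x. rho x \<le> 1 / (4 * of_nat m)}"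
  have "quasi_convex tau Q"
    unfolding Q_def rho_ball_eq_prepolar[OF \<open>1 \<le> m\<close>]
    using chain_character_in_dual dual_L_subset_dual_tau by (intro prepolar_quasi_convex) blast
  moreover have "nhd0 tau Q"
    unfolding nhd0_def Q_def using \<open>1 \<le> m\<close>
    by (intro exI[of _ "N.mball 0 (1 / (4 * of_nat m))"] conjI N.openin_mball) (auto simp: subset_iff norm_dist_def rho_minus)
  moreover have "Q \<subseteq> U"
  proof
    fix x assume "x \<in> Q"
    then have "x \<in> N.mball 0 r"
      using \<open>1 / (4 * of_nat m) < r\<close> unfolding Q_def by (simp add: norm_dist_def rho_minus)
    then show "x \<in> U" using \<open>N.mball 0 r \<subseteq> V\<close> V(3) by blast
  qed
  ultimately show "\<exists>Q. quasi_convex tau Q \<and> nhd0 tau Q \<and> Q \<subseteq> U" by blast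
qed

end

section \<open>Characters continuous for \<open>\<tau>\<close> are continuous for \<open>L\<close>\<close>

text \<open>Fix \<open>\<theta>\<close> such that \<open>\<rho>(x) < \<delta>\<close> implies \<open>x\<theta> \<in> T\<^sub>+\<close>.  We show \<open>b\<^sub>M \<theta> \<in> \<int>\<close> for some \<open>M\<close> by
  studying \<open>t\<^sub>m = \<parallel>b\<^sub>m \<theta>\<parallel>\<close>.  If eventually \<open>b\<^sub>m\<^sub>+\<^sub>1 t\<^sub>m < b\<^sub>m/2\<close>, then \<open>t\<^sub>m\<close> doubles at each step
  and must vanish.  Otherwise \<open>b\<^sub>m\<^sub>+\<^sub>1 t\<^sub>m \<ge> b\<^sub>m/2\<close> infinitely often, and adding long blocks of
  multiples of such \<open>b\<^sub>m\<close> to an element of small norm increases the position of \<open>x\<theta>\<close> in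
  \<open>[0, 1/4]\<close> by at least \<open>\<delta>/16\<close> each time, which cannot go on forever.\<close>

lemma Ints_progression_shift:
  assumes "of_int x * \<theta> - v \<in> \<int>" "of_int \<sigma> * (of_int c * \<theta>) - t \<in> \<int>"
  shows "of_int (x + int n * \<sigma> * c) * \<theta> - (v + real n * t) \<in> \<int>"
proof -
  have "of_int (x + int n * \<sigma> * c) * \<theta> - (v + real n * t) =
        (of_int x * \<theta> - v) + of_nat n * (of_int \<sigma> * (of_int c * \<theta>) - t)"
    by (simp add: algebra_simps)
  then show ?thesis using assms by (metis Ints_add Ints_mult Ints_of_nat)
qed

context divisor_chain
begin

definition level_dist :: "real \<Rightarrow> nat \<Rightarrow> real" where
  "level_dist \<theta> m = int_dist (of_int (b m) * \<theta>)"

lemma level_dist_sign: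
  "\<exists>\<sigma>::int. (\<sigma> = 1 \<or> \<sigma> = -1) \<and> of_int \<sigma> * (of_int (b m) * \<theta>) - level_dist \<theta> m \<in> \<int>"
  unfolding level_dist_def by (rule int_dist_sign)

lemma level_dist_doubles:
  assumes "real_of_int (b (Suc m)) * level_dist \<theta> m < real_of_int (b m) / 2"
  shows "2 * level_dist \<theta> m \<le> level_dist \<theta> (Suc m)"
proof -
  define t where "t = level_dist \<theta> m"
  obtain r where r: "b (Suc m) = b m * r" "2 \<le> r" using b_Suc_quotient by blast
  obtain \<sigma>::int where s: "\<sigma> = 1 \<or> \<sigma> = -1" "of_int \<sigma> * (of_int (b m) * \<theta>) - t \<in> \<int>"
    using level_dist_sign unfolding t_def by blast
  have "of_int \<sigma> * (of_int (b (Suc m)) * \<theta>) - of_int r * t =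
        of_int r * (of_int \<sigma> * (of_int (b m) * \<theta>) - t)"
    unfolding r by (simp add: algebra_simps)
  then have "of_int \<sigma> * (of_int (b (Suc m)) * \<theta>) - of_int r * t \<in> \<int>"
    using s(2) by (metis Ints_mult Ints_of_int)
  then have "int_dist (of_int \<sigma> * (of_int (b (Suc m)) * \<theta>)) = int_dist (of_int r * t)"
    by (rule int_dist_diff_Ints)
  moreover have "int_dist (of_int \<sigma> * (of_int (b (Suc m)) * \<theta>)) = level_dist \<theta> (Suc m)"
    unfolding level_dist_def using s(1) by auto
  moreover have "real_of_int (b m) * (of_int r * t) < real_of_int (b m) * (1/2)"
    using assms r unfolding t_def by (simp add: algebra_simps)
  then have "of_int r * t < 1/2" using b_pos_real[of m] by (simp only: mult_less_cancel_left_pos)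
  moreover have "0 \<le> t" unfolding t_def level_dist_def by (rule int_dist_nonneg)
  ultimately have "level_dist \<theta> (Suc m) = of_int r * t"
    using r(2) int_dist_eq_self[of "of_int r * t"] by simp
  moreover have "2 * t \<le> of_int r * t" using r(2) \<open>0 \<le> t\<close> by (intro mult_right_mono) auto
  ultimately show ?thesis unfolding t_def by simp
qed

text \<open>First case: eventually \<open>b\<^sub>m\<^sub>+\<^sub>1 t\<^sub>m < b\<^sub>m/2\<close>, so \<open>t\<^sub>m\<close> grows geometrically unless it is 0.\<close>

lemma torsion_if_eventually_small:
  assumes small: "\<And>m. M0 \<le> m \<Longrightarrow> real_of_int (b (Suc m)) * level_dist \<theta> m < real_of_int (b m) / 2"
  shows "\<exists>M. of_int (b M) * \<theta> \<in> \<int>"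
proof -
  define t where "t = level_dist \<theta>"
  have grow: "2 ^ n * t M0 \<le> t (M0 + n)" for n
  proof (induction n)
    case (Suc n)
    have "2 ^ Suc n * t M0 \<le> 2 * t (M0 + n)" using Suc by simp
    also have "\<dots> \<le> t (Suc (M0 + n))"
      unfolding t_def by (rule level_dist_doubles) (use small in simp)
    finally show ?case by simp
  qed simp
  have "t M0 = 0"
  proof (rule ccontr)
    assume "t M0 \<noteq> 0"
    then have pos: "t M0 > 0" using int_dist_nonneg unfolding t_def level_dist_def by (simp add: less_le)
    obtain n where "1 / t M0 < 2 ^ n" using real_arch_pow[of 2 "1 / t M0"] by auto
    then have "1 < 2 ^ n * t M0" using pos by (simp add: field_simps)
    moreover have "t (M0 + n) \<le> 1/2" unfolding t_def level_dist_def by (rule int_dist_le_half)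
    ultimately show False using grow[of n] by linarith
  qed
  then show ?thesis unfolding t_def level_dist_def using int_dist_eq_0_imp_Ints by blast
qed

definition admissible :: "real \<Rightarrow> int \<Rightarrow> nat \<Rightarrow> bool" where
  "admissible \<delta> x m \<longleftrightarrow> rho x \<le> \<delta>/2 \<and> \<bar>real_of_int x\<bar> \<le> \<delta>/2 * real_of_int (b m)"

lemma admissible_0: "0 \<le> \<delta> \<Longrightarrow> admissible \<delta> 0 m"
  unfolding admissible_def using b_pos_real[of m] by simp

lemma admissible_step:
  assumes adm: "admissible \<delta> x m" and "m \<le> m'" "0 < \<delta>"
    and n: "real n * real_of_int (b m') \<le> \<delta> * real_of_int (b (Suc m')) / 4"
    and s: "\<sigma> = 1 \<or> \<sigma> = -1"
  shows "admissible \<delta> (x + int n * \<sigma> * b m') (Suc m')"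
proof -
  define y where "y = x + int n * \<sigma> * b m'"
  have absx: "\<bar>real_of_int x\<bar> \<le> \<delta>/2 * real_of_int (b m)" using adm unfolding admissible_def by simp
  have "real_of_int (b m) \<le> real_of_int (b m')" using b_mono[OF \<open>m \<le> m'\<close>] by simp
  moreover have "2 * real_of_int (b m') \<le> real_of_int (b (Suc m'))" using b_double[of m'] by linarith
  ultimately have bm: "\<delta>/2 * real_of_int (b m) \<le> \<delta>/4 * real_of_int (b (Suc m'))"
    using \<open>0 < \<delta>\<close> by (simp add: field_simps)
  have "\<bar>real_of_int (int n * \<sigma> * b m')\<bar> = real n * real_of_int (b m')"
    using s b_pos[of m'] by (auto simp: abs_mult)
  moreover have "\<bar>real_of_int y\<bar> \<le> \<bar>real_of_int x\<bar> + \<bar>real_of_int (int n * \<sigma> * b m')\<bar>"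
    unfolding y_def of_int_add by (rule abs_triangle_ineq)
  ultimately have absy: "\<bar>real_of_int y\<bar> \<le> \<delta>/2 * real_of_int (b (Suc m'))"
    using absx bm n by linarith
  have "int_dist (real_of_int y / real_of_int (b j)) \<le> \<delta>/2" for j
  proof (cases "j \<le> m'")
    case True
    then obtain c where c: "b m' = b j * c" using b_dvd_mono by blast
    have "real_of_int y / real_of_int (b j) = real_of_int x / real_of_int (b j) + of_int (int n * \<sigma> * c)"
      unfolding y_def c using b_pos_real[of j] by (simp add: field_simps)
    then have "int_dist (real_of_int y / real_of_int (b j)) = int_dist (real_of_int x / real_of_int (b j))"
      by (simp only: int_dist_add_of_int)
    then show ?thesis using adm int_dist_le_rho[of x j] unfolding admissible_def by linarith
  next
    case False
    then have "\<delta>/2 * real_of_int (b (Suc m')) \<le> \<delta>/2 * real_of_int (b j)"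
      using b_mono[of "Suc m'" j] \<open>0 < \<delta>\<close> by simp
    then have "\<bar>real_of_int y\<bar> / real_of_int (b j) \<le> \<delta>/2"
      using absy b_pos_real[of j] by (simp add: divide_le_eq)
    moreover have "int_dist (real_of_int y / real_of_int (b j)) \<le> \<bar>real_of_int y\<bar> / real_of_int (b j)"
      using int_dist_le_abs[of "real_of_int y / real_of_int (b j)"] b_pos_real[of j] by simp
    ultimately show ?thesis by linarith
  qed
  with absy show ?thesis unfolding admissible_def y_def rho_le_iff by simp
qed

text \<open>The length of the block of multiples of \<open>b\<^sub>m\<close> added at level \<open>m\<close>: about \<open>\<delta> b\<^sub>m\<^sub>+\<^sub>1 / (4 b\<^sub>m)\<close>,
  which is at least 1 once \<open>m > 16/\<delta>\<close> by the growth condition.\<close>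

definition block_length :: "real \<Rightarrow> nat \<Rightarrow> nat" where
  "block_length \<delta> m = nat \<lfloor>\<delta> * real_of_int (b (Suc m)) / (4 * real_of_int (b m))\<rfloor>"

lemma block_length_bounds:
  assumes "0 < \<delta>" "16 / \<delta> < real m"
  shows "real (block_length \<delta> m) * real_of_int (b m) \<le> \<delta> * real_of_int (b (Suc m)) / 4"
    and "\<delta> * real_of_int (b (Suc m)) / (8 * real_of_int (b m)) \<le> real (block_length \<delta> m)"
    and "1 \<le> block_length \<delta> m"
proof -
  define z where "z = \<delta> * real_of_int (b (Suc m)) / (4 * real_of_int (b m))"
  have "real_of_int ((int m + 2) * b m) \<le> real_of_int (b (Suc m))"
    using b_growth[of m] by linarith
  then have "real m + 2 \<le> real_of_int (b (Suc m)) / real_of_int (b m)"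
    using b_pos_real[of m] by (simp add: field_simps)
  then have "\<delta> / 4 * (real m + 2) \<le> \<delta> / 4 * (real_of_int (b (Suc m)) / real_of_int (b m))"
    using \<open>0 < \<delta>\<close> by (intro mult_left_mono) auto
  then have "\<delta> / 4 * (real m + 2) \<le> z" unfolding z_def by simp
  moreover have "16 < \<delta> * real m" using assms by (simp add: field_simps)
  ultimately have "4 \<le> z" using \<open>0 < \<delta>\<close> by (simp add: algebra_simps)
  then have "real (block_length \<delta> m) = of_int \<lfloor>z\<rfloor>" unfolding block_length_def z_def[symmetric] by simp
  moreover have "of_int \<lfloor>z\<rfloor> \<le> z" "z - 1 < of_int \<lfloor>z\<rfloor>" by linarith+
  ultimately have N: "real (block_length \<delta> m) \<le> z" "z / 2 \<le> real (block_length \<delta> m)"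
    "1 \<le> real (block_length \<delta> m)"
    using \<open>4 \<le> z\<close> by linarith+
  then show "1 \<le> block_length \<delta> m" by simp
  from N(1,2) show "real (block_length \<delta> m) * real_of_int (b m) \<le> \<delta> * real_of_int (b (Suc m)) / 4"
    "\<delta> * real_of_int (b (Suc m)) / (8 * real_of_int (b m)) \<le> real (block_length \<delta> m)"
    unfolding z_def using b_pos_real[of m] by (simp_all add: field_simps)
qed

lemma block_admissible:
  assumes "admissible \<delta> y m" "m \<le> m'" "0 < \<delta>" "16 / \<delta> < real m'"
    and "n \<le> block_length \<delta> m'" "\<sigma> = 1 \<or> \<sigma> = -1"
  shows "admissible \<delta> (y + int n * \<sigma> * b m') (Suc m')"
proof (rule admissible_step[OF assms(1-3) _ assms(6)])
  have "real n * real_of_int (b m') \<le> real (block_length \<delta> m') * real_of_int (b m')"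
    using assms(5) b_pos_real[of m'] by (intro mult_right_mono) auto
  then show "real n * real_of_int (b m') \<le> \<delta> * real_of_int (b (Suc m')) / 4"
    using block_length_bounds(1)[OF assms(3,4)] by linarith
qed

text \<open>One accumulation step: at a level \<open>m' \<ge> m\<close> with \<open>b\<^sub>m\<^sub>'\<^sub>+\<^sub>1 t\<^sub>m\<^sub>' \<ge> b\<^sub>m\<^sub>'/2\<close>, adding a block of
  multiples of \<open>\<sigma> b\<^sub>m\<^sub>'\<close> moves \<open>x\<theta>\<close> (modulo 1) forward by at least \<open>\<delta>/16\<close> inside \<open>[0, 1/4]\<close>.\<close>

lemma accumulation_step:
  assumes "0 < \<delta>"
    and small: "\<And>x. rho x < \<delta> \<Longrightarrow> int_dist (of_int x * \<theta>) \<le> 1/4"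
    and adm: "admissible \<delta> x m" and v: "of_int x * \<theta> - v \<in> \<int>" "0 \<le> v" "v \<le> 1/4"
    and "m \<le> m'" "16 / \<delta> < real m'"
    and large: "real_of_int (b m') / 2 \<le> real_of_int (b (Suc m')) * level_dist \<theta> m'"
  shows "\<exists>x' m'' v'. admissible \<delta> x' m'' \<and> of_int x' * \<theta> - v' \<in> \<int> \<and> 0 \<le> v' \<and> v' \<le> 1/4 \<and>
    v + \<delta>/16 \<le> v'"
proof -
  define t where "t = level_dist \<theta> m'"
  define N where "N = block_length \<delta> m'"
  note N_bounds = block_length_bounds[OF \<open>0 < \<delta>\<close> \<open>16 / \<delta> < real m'\<close>, folded N_def]
  have adm_small: "int_dist (of_int y * \<theta>) \<le> 1/4" if "admissible \<delta> y k" for y k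
    using that \<open>0 < \<delta>\<close> small unfolding admissible_def by simp
  have "0 \<le> t" unfolding t_def level_dist_def by (rule int_dist_nonneg)
  obtain \<sigma>::int where s: "\<sigma> = 1 \<or> \<sigma> = -1" "of_int \<sigma> * (of_int (b m') * \<theta>) - t \<in> \<int>"
    using level_dist_sign unfolding t_def by blast
  have block: "admissible \<delta> (y + int n * \<sigma> * b m') (Suc m')" if "admissible \<delta> y m" "n \<le> N" for y n
    using block_admissible[OF that(1) \<open>m \<le> m'\<close> \<open>0 < \<delta>\<close> \<open>16 / \<delta> < real m'\<close> _ s(1)] that(2)
    unfolding N_def .
  have "t \<le> 1/4"
  proof -
    have "admissible \<delta> 0 m" using \<open>0 < \<delta>\<close> by (simp add: admissible_0)
    then have "admissible \<delta> (0 + int 1 * \<sigma> * b m') (Suc m')"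
      using N_bounds(3) by (intro block) auto
    then have "admissible \<delta> (\<sigma> * b m') (Suc m')" by simp
    then have "int_dist (of_int (\<sigma> * b m') * \<theta>) \<le> 1/4" by (rule adm_small)
    moreover have "int_dist (of_int (\<sigma> * b m') * \<theta>) = t"
      unfolding t_def level_dist_def using s(1) by auto
    ultimately show ?thesis by simp
  qed
  have shift: "of_int (x + int n * \<sigma> * b m') * \<theta> - (v + real n * t) \<in> \<int>" for n
    using Ints_progression_shift[OF v(1) s(2)] .
  have "int_dist (v + real n * t) \<le> 1/4" if "n \<le> N" for n
    using adm_small[OF block[OF adm that]] int_dist_diff_Ints[OF shift[of n]] by simp
  then have "v + real N * t \<le> 1/4"
    using v(2,3) \<open>0 \<le> t\<close> \<open>t \<le> 1/4\<close> by (intro progression_stays_small[of _ _ N]) auto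
  moreover have "v + \<delta>/16 \<le> v + real N * t"
  proof -
    have "\<delta> * (real_of_int (b m') / 2) \<le> \<delta> * (real_of_int (b (Suc m')) * t)"
      using large \<open>0 < \<delta>\<close> unfolding t_def by (intro mult_left_mono) auto
    then have "\<delta>/16 \<le> \<delta> * real_of_int (b (Suc m')) / (8 * real_of_int (b m')) * t"
      using b_pos_real[of m'] by (simp add: field_simps)
    also have "\<dots> \<le> real N * t" using N_bounds(2) \<open>0 \<le> t\<close> by (intro mult_right_mono)
    finally have "\<delta>/16 \<le> real N * t" .
    then show "v + \<delta>/16 \<le> v + real N * t" by simp
  qed
  moreover have "0 \<le> v + real N * t" using v(2) \<open>0 \<le> t\<close> by simp
  moreover have "admissible \<delta> (x + int N * \<sigma> * b m') (Suc m')" using block[OF adm] by simp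
  ultimately show ?thesis using shift[of N] by blast
qed

lemma accumulation:
  assumes "0 < \<delta>"
    and small: "\<And>x. rho x < \<delta> \<Longrightarrow> int_dist (of_int x * \<theta>) \<le> 1/4"
    and infinitely: "\<And>M0. \<exists>m\<ge>M0. real_of_int (b m) / 2 \<le> real_of_int (b (Suc m)) * level_dist \<theta> m"
  shows "\<exists>x m v. admissible \<delta> x m \<and> of_int x * \<theta> - v \<in> \<int> \<and> 0 \<le> v \<and> v \<le> 1/4 \<and>
    real K * (\<delta>/16) \<le> v"
proof (induction K)
  case 0
  show ?case using admissible_0[of \<delta> 0] \<open>0 < \<delta>\<close> by (intro exI[of _ 0]) auto
next
  case (Suc K)
  then obtain x m v where adm: "admissible \<delta> x m" and v: "of_int x * \<theta> - v \<in> \<int>" "0 \<le> v" "v \<le> 1/4"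
    and K: "real K * (\<delta>/16) \<le> v" by blast
  obtain M1 :: nat where "16 / \<delta> < real M1" using reals_Archimedean2 by blast
  obtain m' where m': "max m M1 \<le> m'"
    and large: "real_of_int (b m') / 2 \<le> real_of_int (b (Suc m')) * level_dist \<theta> m'"
    using infinitely by blast
  have "m \<le> m'" "16 / \<delta> < real m'" using m' \<open>16 / \<delta> < real M1\<close> by auto
  then obtain x' m'' v' where "admissible \<delta> x' m''" "of_int x' * \<theta> - v' \<in> \<int>" "0 \<le> v'" "v' \<le> 1/4"
    and "v + \<delta>/16 \<le> v'"
    using accumulation_step[OF \<open>0 < \<delta>\<close> small adm v _ _ large] by blast
  moreover have "real (Suc K) * (\<delta>/16) \<le> v'" using K \<open>v + \<delta>/16 \<le> v'\<close> by (simp add: distrib_right)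
  ultimately show ?case by blast
qed

lemma torsion_of_small_character:
  assumes "0 < \<delta>" and small: "\<And>x. rho x < \<delta> \<Longrightarrow> int_dist (of_int x * \<theta>) \<le> 1/4"
  shows "\<exists>M. of_int (b M) * \<theta> \<in> \<int>"
proof (cases "\<exists>M0. \<forall>m\<ge>M0. real_of_int (b (Suc m)) * level_dist \<theta> m < real_of_int (b m) / 2")
  case True
  then show ?thesis using torsion_if_eventually_small by blast
next
  case False
  then have infinitely:
    "\<And>M0. \<exists>m\<ge>M0. real_of_int (b m) / 2 \<le> real_of_int (b (Suc m)) * level_dist \<theta> m"
    by (meson not_less)
  obtain K :: nat where K: "64 / \<delta> < real K" using reals_Archimedean2 by blast
  then obtain v where "v \<le> 1/4" "real K * (\<delta>/16) \<le> v"
    using accumulation[OF \<open>0 < \<delta>\<close> small infinitely, where K=K] by blast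
  moreover have "4 < real K * (\<delta>/16)" using K \<open>0 < \<delta>\<close> by (simp add: field_simps)
  ultimately show ?thesis by linarith
qed

lemma tau_character_small:
  assumes "chr \<in> dual tau"
  shows "\<exists>\<delta>>0. \<forall>x. rho x < \<delta> \<longrightarrow> int_dist (of_int x * chr 1) \<le> 1/4"
proof -
  have range: "\<And>n. 0 \<le> chr n \<and> chr n < 1"
    and hom: "\<And>m n. chr (m + n) = frac (chr m + chr n)"
    and cont: "continuous_map tau euclidean (\<lambda>n. cis (2 * pi * chr n))"
    using assms unfolding dual_def by auto
  have lin: "chr x = frac (of_int x * chr 1)" for x by (rule character_eq_frac_mult[OF range hom])
  have "openin tau {x \<in> topspace tau. cis (2 * pi * chr x) \<in> ball 1 1}"
    using cont unfolding continuous_map by auto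
  moreover have "0 \<in> {x \<in> topspace tau. cis (2 * pi * chr x) \<in> ball 1 1}"
    using lin[of 0] by simp
  ultimately obtain \<delta> where "\<delta> > 0"
    and ball: "\<And>y. rho (0 - y) < \<delta> \<Longrightarrow> cis (2 * pi * chr y) \<in> ball 1 1"
    unfolding openin_norm_topology by blast
  have "int_dist (of_int x * chr 1) \<le> 1/4" if "rho x < \<delta>" for x
  proof -
    have "cmod (cis (2 * pi * chr x) - 1) < 1"
      using ball[of x] that rho_minus[of x] by (simp add: dist_norm norm_minus_commute)
    then have "int_dist (chr x) \<le> 1/4" using cis_near_one_imp_Tplus range by blast
    then show ?thesis using lin[of x] by simp
  qed
  with \<open>\<delta> > 0\<close> show ?thesis by blast
qed

lemma dual_tau_subset_dual_L: "dual tau \<subseteq> dual L"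
proof
  fix chr assume chr: "chr \<in> dual tau"
  define \<theta> where "\<theta> = chr 1"
  have range: "\<And>n. 0 \<le> chr n \<and> chr n < 1"
    and hom: "\<And>m n. chr (m + n) = frac (chr m + chr n)"
    using chr unfolding dual_def by auto
  have lin: "chr x = frac (of_int x * \<theta>)" for x
    unfolding \<theta>_def by (rule character_eq_frac_mult[OF range hom])
  obtain \<delta> where "\<delta> > 0" "\<And>x. rho x < \<delta> \<Longrightarrow> int_dist (of_int x * \<theta>) \<le> 1/4"
    using tau_character_small[OF chr] unfolding \<theta>_def by blast
  then obtain M where M: "of_int (b M) * \<theta> \<in> \<int>" using torsion_of_small_character by blast
  have "chr (x + b M * k) = chr x" for x k
  proof -
    have "of_int (x + b M * k) * \<theta> = of_int x * \<theta> + of_int k * (of_int (b M) * \<theta>)"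
      by (simp add: algebra_simps)
    moreover have "of_int k * (of_int (b M) * \<theta>) \<in> \<int>" using M by (metis Ints_mult Ints_of_int)
    ultimately show ?thesis unfolding lin by (simp add: frac_add_int_right)
  qed
  then have "continuous_map L euclidean (\<lambda>n. cis (2 * pi * chr n))"
    by (intro periodic_imp_continuous[where j=M]) simp
  with chr show "chr \<in> dual L" unfolding dual_def by simp
qed

lemma finer_compatible_topology:
  "group_topology_int tau \<and> metrizable_space tau \<and> locally_quasi_convex tau \<and>
   Hausdorff_space tau \<and> finer tau L \<and> tau \<noteq> L \<and> dual tau = dual L"
  using norm_topology_group N.metrizable_space_mtopology tau_locally_quasi_convex
    N.Hausdorff_space_mtopology tau_finer tau_ne_L dual_tau_subset_dual_L dual_L_subset_dual_tau
  by blast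

lemma not_mackey: "\<not> mackey L"
proof
  assume "mackey L"
  then have "finer L tau"
    unfolding mackey_def using finer_compatible_topology by blast
  with tau_finer have "openin L = openin tau" unfolding finer_def by blast
  then show False using tau_ne_L by (simp add: topology_eq)
qed

end

section \<open>Divisor chains for non-discrete Hausdorff linear topologies\<close>

lemma int_subgroup_mult:
  assumes "int_subgroup H" "g \<in> H"
  shows "g * k \<in> H"
proof -
  have zero: "0 \<in> H" and diff: "\<And>x y. x \<in> H \<Longrightarrow> y \<in> H \<Longrightarrow> x - y \<in> H"
    using assms(1) unfolding int_subgroup_def by auto
  have add: "x + y \<in> H" if "x \<in> H" "y \<in> H" for x y
    using diff[OF that(1) diff[OF zero that(2)]] by simp
  show ?thesis
  proof (induction k rule: int_induct[where k=0])
    case base then show ?case using zero by simp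
  next
    case (step1 i) then show ?case using add[of "g * i" g] assms(2) by (simp add: algebra_simps)
  next
    case (step2 i) then show ?case using diff[of "g * i" g] assms(2) by (simp add: algebra_simps)
  qed
qed

text \<open>Every subgroup of \<open>\<int>\<close> is \<open>g\<int>\<close> for some \<open>g \<ge> 0\<close>: take \<open>g\<close> the least positive element.\<close>

lemma int_subgroup_eq_multiples:
  assumes "int_subgroup H"
  shows "\<exists>g\<ge>0. H = range ((*) g)"
proof (cases "H = {0}")
  case True
  then show ?thesis by (intro exI[of _ 0]) auto
next
  case False
  have zero: "0 \<in> H" and diff: "\<And>x y. x \<in> H \<Longrightarrow> y \<in> H \<Longrightarrow> x - y \<in> H"
    using assms unfolding int_subgroup_def by auto
  obtain x where "x \<in> H" "x \<noteq> 0" using False zero by blast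
  then have "\<bar>x\<bar> \<in> H" using diff[OF zero, of x] by (cases "x \<ge> 0") auto
  then have ex: "\<exists>n::nat. n > 0 \<and> int n \<in> H" using \<open>x \<noteq> 0\<close> by (intro exI[of _ "nat \<bar>x\<bar>"]) auto
  define n where "n = (LEAST n::nat. n > 0 \<and> int n \<in> H)"
  have n: "n > 0" "int n \<in> H" using LeastI_ex[OF ex] unfolding n_def by auto
  have n_least: "n \<le> m" if "m > 0" "int m \<in> H" for m
    unfolding n_def using that by (intro Least_le) simp
  have "H \<subseteq> range ((*) (int n))"
  proof
    fix y assume "y \<in> H"
    have "y mod int n = y - int n * (y div int n)" by (simp add: minus_div_mult_eq_mod[symmetric])
    then have "y mod int n \<in> H" using diff[OF \<open>y \<in> H\<close> int_subgroup_mult[OF assms n(2)]] by simp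
    moreover have "0 \<le> y mod int n" "y mod int n < int n" using n(1) by auto
    ultimately have "y mod int n = 0"
      using n_least[of "nat (y mod int n)"] by (cases "y mod int n = 0") auto
    then have "y = int n * (y div int n)" using mult_div_mod_eq[of "int n" y] by simp
    then show "y \<in> range ((*) (int n))" by blast
  qed
  moreover have "range ((*) (int n)) \<subseteq> H" using int_subgroup_mult[OF assms n(2)] by auto
  ultimately show ?thesis by (intro exI[of _ "int n"]) auto
qed

text \<open>For a non-discrete Hausdorff linear group topology, the positive moduli \<open>h\<close> with \<open>h\<int>\<close> a
  neighbourhood of 0 form a countable, lcm-closed, unbounded set whose multiples are cofinal
  among neighbourhoods of 0; a divisor chain is extracted from them.\<close>

locale nondiscrete_linear_topology =
  fixes L :: "int topology"
  assumes group: "group_topology_int L" and hausdorff: "Hausdorff_space L"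
    and linear: "linear_topology_int L" and nondiscrete: "\<exists>S. \<not> openin L S"
begin

lemma topspace_L: "topspace L = UNIV"
  using group unfolding group_topology_int_def by simp

text \<open>Translations are continuous, so translates of open sets are open.\<close>

lemma openin_translate:
  assumes "openin L U"
  shows "openin L {y. a + y \<in> U}"
proof -
  have "continuous_map L (prod_topology L L) (\<lambda>y. (a, y))"
    by (intro continuous_map_pairedI) (auto simp: topspace_L)
  moreover have "continuous_map (prod_topology L L) L (\<lambda>(x, y). x + y)"
    using group unfolding group_topology_int_def by simp
  ultimately have "continuous_map L L ((\<lambda>(x, y). x + y) \<circ> (\<lambda>y. (a, y)))"
    by (rule continuous_map_compose)
  then have "continuous_map L L (\<lambda>y. a + y)" by (simp add: o_def)
  then show ?thesis using assms unfolding continuous_map topspace_L by simp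
qed

definition moduli :: "int set" where
  "moduli = {h. h > 0 \<and> nhd0 L (range ((*) h))}"

lemma one_in_moduli: "1 \<in> moduli"
proof -
  have "openin L UNIV" using openin_topspace[of L] topspace_L by simp
  then show ?thesis unfolding moduli_def nhd0_def by auto
qed

lemma zero_not_nhd0: "\<not> nhd0 L {0}"
proof
  assume "nhd0 L {0}"
  then obtain V where "openin L V" "0 \<in> V" "V \<subseteq> {0}" unfolding nhd0_def by blast
  then have "openin L {0}" by (metis subset_antisym empty_subsetI insert_subset)
  have "openin L S" for S
  proof (subst openin_subopen, intro ballI)
    fix s assume "s \<in> S"
    have "openin L {y. - s + y \<in> {0}}" by (rule openin_translate[OF \<open>openin L {0}\<close>])
    moreover have "{y. - s + y \<in> {0}} = {s}" by auto
    ultimately show "\<exists>T. openin L T \<and> s \<in> T \<and> T \<subseteq> S" using \<open>s \<in> S\<close> by auto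
  qed
  then show False using nondiscrete by blast
qed

lemma moduli_cofinal:
  assumes "nhd0 L U"
  shows "\<exists>h\<in>moduli. range ((*) h) \<subseteq> U"
proof -
  obtain H where H: "int_subgroup H" "nhd0 L H" "H \<subseteq> U"
    using linear assms unfolding linear_topology_int_def by blast
  obtain g where g: "g \<ge> 0" "H = range ((*) g)" using int_subgroup_eq_multiples[OF H(1)] by blast
  have "g \<noteq> 0"
  proof
    assume "g = 0"
    then have "H = {0}" using g(2) by auto
    then show False using H(2) zero_not_nhd0 by simp
  qed
  then have "g \<in> moduli" using H(2) g unfolding moduli_def by simp
  then show ?thesis using H(3) g(2) by blast
qed

lemma moduli_lcm:
  assumes "a \<in> moduli" "c \<in> moduli"
  shows "lcm a c \<in> moduli"
proof -
  obtain V1 where V1: "openin L V1" "0 \<in> V1" "V1 \<subseteq> range ((*) a)"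
    using assms(1) unfolding moduli_def nhd0_def by blast
  obtain V2 where V2: "openin L V2" "0 \<in> V2" "V2 \<subseteq> range ((*) c)"
    using assms(2) unfolding moduli_def nhd0_def by blast
  have "range ((*) a) \<inter> range ((*) c) \<subseteq> range ((*) (lcm a c))"
  proof
    fix y assume "y \<in> range ((*) a) \<inter> range ((*) c)"
    then have "a dvd y" "c dvd y" unfolding dvd_def by auto
    then have "lcm a c dvd y" by simp
    then obtain k where "y = lcm a c * k" by (rule dvdE)
    then show "y \<in> range ((*) (lcm a c))" by (simp add: rangeI)
  qed
  then have "nhd0 L (range ((*) (lcm a c)))" unfolding nhd0_def using V1 V2
    by (intro exI[of _ "V1 \<inter> V2"]) auto
  moreover have "lcm a c > 0" using assms unfolding moduli_def by (simp add: lcm_pos_int)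
  ultimately show ?thesis unfolding moduli_def by simp
qed

text \<open>By the Hausdorff property some modulus does not divide \<open>K!\<close>, hence exceeds \<open>K\<close>.\<close>

lemma moduli_unbounded:
  assumes "h \<in> moduli"
  shows "\<exists>h'\<in>moduli. h dvd h' \<and> K < h'"
proof -
  define x where "x = int (fact (nat K))"
  have "x \<noteq> 0" unfolding x_def by simp
  then obtain U V where UV: "openin L U" "openin L V" "0 \<in> U" "x \<in> V" "disjnt U V"
    using hausdorff topspace_L unfolding Hausdorff_space_def by (metis UNIV_I)
  then have "nhd0 L U" unfolding nhd0_def by blast
  then obtain g where g: "g \<in> moduli" "range ((*) g) \<subseteq> U" using moduli_cofinal by blast
  have "\<not> g dvd x"
  proof
    assume "g dvd x"
    then have "x \<in> U" using g(2) by (auto elim!: dvdE)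
    then show False using UV by (auto simp: disjnt_def)
  qed
  have "K < g"
  proof (rule ccontr)
    assume "\<not> K < g"
    then have "nat g \<le> nat K" "1 \<le> nat g" using g(1) unfolding moduli_def by auto
    then have "nat g dvd fact (nat K)" by (rule dvd_fact[rotated])
    then have "int (nat g) dvd x" unfolding x_def by (metis int_dvd_int_iff)
    then show False using \<open>\<not> g dvd x\<close> g(1) unfolding moduli_def by simp
  qed
  have "lcm h g \<in> moduli" by (rule moduli_lcm[OF assms g(1)])
  moreover have "g \<le> lcm h g" using calculation unfolding moduli_def by (intro zdvd_imp_le) auto
  ultimately show ?thesis using \<open>K < g\<close> by (intro bexI[of _ "lcm h g"]) auto
qed

definition enum_moduli :: "nat \<Rightarrow> int" where
  "enum_moduli = from_nat_into moduli"

lemma range_enum_moduli: "range enum_moduli = moduli"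
  unfolding enum_moduli_def using one_in_moduli
  by (intro range_from_nat_into) (auto intro: countable_subset[OF subset_UNIV])

definition next_modulus :: "int \<Rightarrow> nat \<Rightarrow> int" where
  "next_modulus c j = (SOME h. h \<in> moduli \<and> c dvd h \<and> (int j + 2) * c \<le> h)"

lemma next_modulus:
  assumes "c \<in> moduli"
  shows "next_modulus c j \<in> moduli \<and> c dvd next_modulus c j \<and> (int j + 2) * c \<le> next_modulus c j"
proof -
  obtain h where "h \<in> moduli" "c dvd h" "(int j + 2) * c < h" using moduli_unbounded[OF assms] by blast
  then have "\<exists>h. h \<in> moduli \<and> c dvd h \<and> (int j + 2) * c \<le> h" using less_imp_le by blast
  then show ?thesis unfolding next_modulus_def by (rule someI_ex)
qed

primrec chain :: "nat \<Rightarrow> int" where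
  "chain 0 = 1"
| "chain (Suc j) = next_modulus (lcm (chain j) (enum_moduli j)) j"

lemma chain_in_moduli: "chain j \<in> moduli"
proof (induction j)
  case 0 then show ?case using one_in_moduli by simp
next
  case (Suc j)
  have "lcm (chain j) (enum_moduli j) \<in> moduli"
    using moduli_lcm Suc range_enum_moduli by blast
  then show ?case using next_modulus by simp
qed

lemma chain_Suc:
  "chain j dvd chain (Suc j)" "enum_moduli j dvd chain (Suc j)"
  "(int j + 2) * chain j \<le> chain (Suc j)"
proof -
  have l: "lcm (chain j) (enum_moduli j) \<in> moduli"
    using moduli_lcm chain_in_moduli range_enum_moduli by blast
  note n = next_modulus[OF l, of j]
  show "chain j dvd chain (Suc j)" "enum_moduli j dvd chain (Suc j)"
    using n by (auto intro: dvd_trans)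
  have "chain j \<le> lcm (chain j) (enum_moduli j)"
    using l unfolding moduli_def by (intro zdvd_imp_le) auto
  then have "(int j + 2) * chain j \<le> (int j + 2) * lcm (chain j) (enum_moduli j)"
    by (intro mult_left_mono) auto
  also have "\<dots> \<le> chain (Suc j)" using n by simp
  finally show "(int j + 2) * chain j \<le> chain (Suc j)" .
qed

lemma divisor_chain: "divisor_chain chain L"
proof
  show "1 \<le> chain j" for j using chain_in_moduli[of j] unfolding moduli_def by simp
  show "chain j dvd chain (Suc j)" "(int j + 2) * chain j \<le> chain (Suc j)" for j
    by (rule chain_Suc)+
  show "openin L U \<longleftrightarrow> (\<forall>x\<in>U. \<exists>j. \<forall>k. x + chain j * k \<in> U)" for U
  proof
    assume U: "openin L U"
    show "\<forall>x\<in>U. \<exists>j. \<forall>k. x + chain j * k \<in> U"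
    proof
      fix x assume "x \<in> U"
      then have "nhd0 L {y. x + y \<in> U}" unfolding nhd0_def using openin_translate[OF U, of x] by auto
      then obtain h where h: "h \<in> moduli" "range ((*) h) \<subseteq> {y. x + y \<in> U}"
        using moduli_cofinal by blast
      obtain i where "h = enum_moduli i" using h(1) range_enum_moduli by blast
      then obtain c where c: "chain (Suc i) = h * c" using chain_Suc(2)[of i] by blast
      have "x + chain (Suc i) * k \<in> U" for k using h(2) unfolding c by (auto simp: mult.assoc)
      then show "\<exists>j. \<forall>k. x + chain j * k \<in> U" by blast
    qed
  next
    assume cosets: "\<forall>x\<in>U. \<exists>j. \<forall>k. x + chain j * k \<in> U"
    show "openin L U"
    proof (subst openin_subopen, intro ballI)
      fix x assume "x \<in> U"
      then obtain j where j: "\<forall>k. x + chain j * k \<in> U" using cosets by blast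
      obtain V where V: "openin L V" "0 \<in> V" "V \<subseteq> range ((*) (chain j))"
        using chain_in_moduli[of j] unfolding moduli_def nhd0_def by blast
      have "{y. - x + y \<in> V} \<subseteq> U"
      proof
        fix y assume "y \<in> {y. - x + y \<in> V}"
        then obtain k where "- x + y = chain j * k" using V(3) by auto
        then show "y \<in> U" using j by (metis add.commute diff_add_cancel uminus_add_conv_diff)
      qed
      moreover have "openin L {y. - x + y \<in> V}" by (rule openin_translate[OF V(1)])
      ultimately show "\<exists>T. openin L T \<and> x \<in> T \<and> T \<subseteq> U" using V(2) by auto
    qed
  qed
qed

end

section \<open>The p-adic topology\<close>

lemma openin_padic:
  "openin (padic_topology p) U \<longleftrightarrow> (\<forall>x\<in>U. \<exists>n::nat. \<forall>k. x + p ^ n * k \<in> U)"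
proof -
  define P where "P = (\<lambda>U. \<forall>x\<in>U. \<exists>n::nat. {x + p ^ n * k | k. True} \<subseteq> U)"
  have "istopology P" unfolding istopology_def P_def
  proof (intro conjI allI impI ballI)
    fix S T x assume S: "\<forall>x\<in>S. \<exists>n::nat. {x + p ^ n * k |k. True} \<subseteq> S"
      and T: "\<forall>x\<in>T. \<exists>n::nat. {x + p ^ n * k |k. True} \<subseteq> T" and "x \<in> S \<inter> T"
    then obtain n1 n2 where n1: "{x + p ^ n1 * k |k. True} \<subseteq> S" and n2: "{x + p ^ n2 * k |k. True} \<subseteq> T"
      by blast
    have "{x + p ^ (n1 + n2) * k |k. True} \<subseteq> S \<inter> T"
    proof
      fix y assume "y \<in> {x + p ^ (n1 + n2) * k |k. True}"
      then obtain k where y: "y = x + p ^ (n1 + n2) * k" by blast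
      have "y = x + p ^ n1 * (p ^ n2 * k)" "y = x + p ^ n2 * (p ^ n1 * k)"
        unfolding y by (simp_all add: power_add algebra_simps)
      then show "y \<in> S \<inter> T" using n1 n2 by blast
    qed
    then show "\<exists>n::nat. {x + p ^ n * k |k. True} \<subseteq> S \<inter> T" by blast
  next
    fix K x assume K: "\<forall>U\<in>K. \<forall>x\<in>U. \<exists>n::nat. {x + p ^ n * k |k. True} \<subseteq> U"
      and "x \<in> \<Union>K"
    then obtain U where "U \<in> K" "x \<in> U" by blast
    then obtain n where "{x + p ^ n * k |k. True} \<subseteq> U" using K by blast
    with \<open>U \<in> K\<close> show "\<exists>n::nat. {x + p ^ n * k |k. True} \<subseteq> \<Union>K" by blast
  qed
  then have "openin (padic_topology p) U \<longleftrightarrow> P U"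
    unfolding padic_topology_def P_def[symmetric] by simp
  then show ?thesis unfolding P_def by blast
qed

lemma padic_divisor_chain:
  fixes p :: int
  assumes "prime p"
  shows "divisor_chain (\<lambda>j. p ^ (j * j)) (padic_topology p)"
proof
  have p2: "2 \<le> p" using assms prime_ge_2_int by blast
  show "1 \<le> p ^ (j * j)" for j using p2 by simp
  show "p ^ (j * j) dvd p ^ (Suc j * Suc j)" for j by (intro le_imp_power_dvd) simp
  show "(int j + 2) * p ^ (j * j) \<le> p ^ (Suc j * Suc j)" for j
  proof -
    have "int j + 2 \<le> 2 ^ (2 * j + 1)"
      by (induction j) simp_all
    also have "(2::int) ^ (2 * j + 1) \<le> p ^ (2 * j + 1)" using p2 by (intro power_mono) auto
    finally have "(int j + 2) * p ^ (j * j) \<le> p ^ (2 * j + 1) * p ^ (j * j)"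
      using p2 by (intro mult_right_mono) auto
    also have "\<dots> = p ^ (Suc j * Suc j)"
    proof -
      have "Suc j * Suc j = (2 * j + 1) + j * j" by simp
      then show ?thesis by (simp only: power_add)
    qed
    finally show ?thesis .
  qed
  show "openin (padic_topology p) U \<longleftrightarrow> (\<forall>x\<in>U. \<exists>j. \<forall>k. x + p ^ (j * j) * k \<in> U)" for U
    unfolding openin_padic
  proof (intro ball_cong refl iffI)
    fix x assume "\<exists>n::nat. \<forall>k. x + p ^ n * k \<in> U"
    then obtain n where n: "\<forall>k. x + p ^ n * k \<in> U" by blast
    have "x + p ^ (n * n) * k \<in> U" for k
    proof -
      obtain c where "p ^ (n * n) = p ^ n * c" using le_imp_power_dvd[of n "n * n" p] by (auto simp: le_square)
      then show ?thesis using n by (simp add: mult.assoc)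
    qed
    then show "\<exists>j. \<forall>k. x + p ^ (j * j) * k \<in> U" by blast
  qed blast
qed

theorem theorem4p6:
  shows "(\<forall>L. group_topology_int L \<and> Hausdorff_space L \<and> linear_topology_int L \<and>
             (\<exists>S. \<not> openin L S) \<longrightarrow>
           (\<exists>t. group_topology_int t \<and> metrizable_space t \<and> locally_quasi_convex t \<and>
                 Hausdorff_space t \<and> finer t L \<and> t \<noteq> L \<and> dual t = dual L) \<and>
           \<not> mackey L) \<and>
         (\<forall>p::int. prime p \<longrightarrow> \<not> mackey (padic_topology p))"
proof (intro conjI allI impI)
  fix L assume "group_topology_int L \<and> Hausdorff_space L \<and> linear_topology_int L \<and> (\<exists>S. \<not> openin L S)"
  then interpret nondiscrete_linear_topology L by unfold_locales blast+
  show "\<exists>t. group_topology_int t \<and> metrizable_space t \<and> locally_quasi_convex t \<and>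
      Hausdorff_space t \<and> finer t L \<and> t \<noteq> L \<and> dual t = dual L"
    using divisor_chain.finer_compatible_topology[OF divisor_chain] by blast
  show "\<not> mackey L" by (rule divisor_chain.not_mackey[OF divisor_chain])
next
  fix p :: int assume "prime p"
  then show "\<not> mackey (padic_topology p)" by (rule divisor_chain.not_mackey[OF padic_divisor_chain])
qed

end
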